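(* Fix $\alpha\in[0,1)$ and $p>1$, let $K_2=\int_0^1(e^{-x^p}-e^{-x})x^{-\alpha-1}\,dx$, $f_2(x)=\frac1{K_2}(e^{-x^p}-e^{-x})x^{-\alpha-1}1_{[0<x<1]}$, and $\varphi(z)=\frac{e^{-z^p}-e^{-z}}{z-z^p}$ for $z\in(0,1)$. Consider the following procedure (Algorithm 2): independently simulate $U\sim U(0,1)$ and $Y\sim\mathrm{beta}\left(\frac{1-\alpha}{p-1},2\right)$, and set $Z=Y^{1/(p-1)}$; if $U\le\varphi(Z)$ return $Z$, otherwise repeat with fresh independent variables. Then: (a) $Z$ has pdf $g_2(x)=\frac{(p-\alpha)(1-\alpha)}{p-1}x^{-\alpha}(1-x^{p-1})$ for $0<x\le1$, and $f_2(x)\le V_2g_2(x)$ for all $x\in(0,1)$, where $V_2=\frac{p-1}{(p-\alpha)(1-\alpha)K_2}$, with $f_2(x)/(V_2g_2(x))=\varphi(x)\in[0,1]$; (b) Algorithm 2 terminates almost surely and its output has pdf $f_2$; (c) the probability of acceptance on each iteration equals $1/V_2=K_2\frac{(p-\alpha)(1-\alpha)}{p-1}$ and satisfies $1/V_2\ge e^{-1}$.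
   Context: $U(0,1)$ denotes the uniform distribution on $(0,1)$; $\mathrm{beta}(\beta,\eta)$ denotes the beta distribution with shape parameters $\beta,\eta>0$, i.e. with density proportional to $y^{\beta-1}(1-y)^{\eta-1}$ on $(0,1)$. *)

theory Defs
  imports "HOL-Probability.Probability"
begin

definition beta_density :: "real \<Rightarrow> real \<Rightarrow> real \<Rightarrow> real" where
  "beta_density b e y =
     indicator {0<..<1} y * (y powr (b - 1) * (1 - y) powr (e - 1) / Beta b e)"

definition uniform01_density :: "real \<Rightarrow> real" where
  "uniform01_density x = indicator {0<..<1} x"

definition K2 :: "real \<Rightarrow> real \<Rightarrow> real" where
  "K2 \<alpha> p = (LBINT x:{0<..<1}. (exp (- (x powr p)) - exp (- x)) * x powr (- \<alpha> - 1))"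

definition f2 :: "real \<Rightarrow> real \<Rightarrow> real \<Rightarrow> real" where
  "f2 \<alpha> p x = indicator {0<..<1} x *
      ((exp (- (x powr p)) - exp (- x)) * x powr (- \<alpha> - 1) / K2 \<alpha> p)"

definition g2 :: "real \<Rightarrow> real \<Rightarrow> real \<Rightarrow> real" where
  "g2 \<alpha> p x = indicator {0<..1} x *
      ((p - \<alpha>) * (1 - \<alpha>) / (p - 1) * x powr (- \<alpha>) * (1 - x powr (p - 1)))"

definition V2 :: "real \<Rightarrow> real \<Rightarrow> real" where
  "V2 \<alpha> p = (p - 1) / ((p - \<alpha>) * (1 - \<alpha>) * K2 \<alpha> p)"

definition phi2 :: "real \<Rightarrow> real \<Rightarrow> real" where
  "phi2 p z = (exp (- (z powr p)) - exp (- z)) / (z - z powr p)"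

end

theory Submission
  imports Defs
begin

text \<open>
  Substituting y = x powr (p - 1) turns the beta((1 - \<alpha>)/(p - 1), 2) density into g2, so
  Z = Y powr (1/(p - 1)) has density g2. On (0,1) one has
  g2 x * phi2 p x = (1 / V2) * f2 x, and the mean value bounds
  exp (-x) * (x - a) \<le> exp (-a) - exp (-x) \<le> x - a with a = x powr p give
  exp (-1) \<le> phi2 p x \<le> 1. Generic rejection sampling then applies: for independent
  uniform U and Z with density g, P(U \<le> \<phi> Z, Z \<in> A) is the integral over A of
  g \<phi> = q f, so the rounds are independent trials with success probability q, the first
  success occurs almost surely, and the value accepted there has density f. Finally
  q is the integral of g2 phi2, which is at least exp (-1) times the integral of g2.
\<close>

lemma exp_neg_diff_bounds:
  fixes a x :: real
  assumes "0 \<le> a" "a \<le> x"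
  shows "exp (- x) * (x - a) \<le> exp (- a) - exp (- x)"
    and "exp (- a) - exp (- x) \<le> x - a"
proof -
  have "exp (- a) - exp (- x) = exp (- x) * (exp (x - a) - 1)"
    by (simp add: algebra_simps flip: exp_add)
  moreover have "x - a \<le> exp (x - a) - 1"
    using exp_ge_add_one_self[of "x - a"] by linarith
  ultimately show "exp (- x) * (x - a) \<le> exp (- a) - exp (- x)"
    by simp
  have "exp (- a) - exp (- x) = exp (- a) * (1 - exp (a - x))"
    by (simp add: algebra_simps flip: exp_add)
  also have "\<dots> \<le> 1 * (x - a)"
  proof (rule mult_mono)
    show "1 - exp (a - x) \<le> x - a"
      using exp_ge_add_one_self[of "a - x"] by linarith
  qed (use assms in auto)
  finally show "exp (- a) - exp (- x) \<le> x - a"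
    by simp
qed

lemma phi2_bounds:
  assumes "0 < x" "x < 1" "1 < p"
  shows "exp (- 1) \<le> phi2 p x" "phi2 p x \<le> 1"
proof -
  have gap: "0 < x - x powr p"
    using powr_less_mono'[of x 1 p] assms by simp
  note bounds = exp_neg_diff_bounds[of "x powr p" x, OF _ less_imp_le]
  have "exp (- 1) * (x - x powr p) \<le> exp (- x) * (x - x powr p)"
    using gap assms by (intro mult_right_mono) auto
  also have "\<dots> \<le> exp (- (x powr p)) - exp (- x)"
    using bounds gap by simp
  finally show "exp (- 1) \<le> phi2 p x"
    unfolding phi2_def using gap by (simp add: le_divide_eq)
  from bounds gap show "phi2 p x \<le> 1"
    unfolding phi2_def by simp
qed

lemma Beta_2:
  fixes b :: real
  assumes "0 < b"
  shows "Beta b 2 = 1 / (b * (b + 1))"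
proof -
  have not_poles: "b \<notin> \<int>\<^sub>\<le>\<^sub>0" "b + 1 \<notin> \<int>\<^sub>\<le>\<^sub>0"
    using assms by (auto elim!: nonpos_Ints_cases)
  have "Gamma (2::real) = 1"
    using Gamma_plus1[of "1::real"] by (simp add: numeral_2_eq_2)
  moreover have "Gamma (b + 2) = (b + 1) * b * Gamma b"
    using Gamma_plus1[OF not_poles(2)] Gamma_plus1[OF not_poles(1)]
    by (simp add: add.assoc)
  moreover have "Gamma b \<noteq> 0"
    using Gamma_real_pos[OF assms] by simp
  ultimately have "Beta b 2 = Gamma b / (b * (b + 1) * Gamma b)"
    by (simp add: Beta_def mult_ac)
  then show ?thesis
    using \<open>Gamma b \<noteq> 0\<close> by simp
qed

section \<open>The change of variables y = x powr r on (0,1]\<close>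

lemma emeasure_Ioc_eq_SUP:
  fixes \<mu> :: "real measure" and s :: "nat \<Rightarrow> real"
  assumes "sets \<mu> = sets borel" "decseq s" "\<And>n. 0 < s n" "\<And>x. 0 < x \<Longrightarrow> \<exists>n. s n \<le> x"
  shows "emeasure \<mu> {0<..b} = (SUP n. emeasure \<mu> {s n..b})"
proof -
  have "{0<..b} = (\<Union>n. {s n..b})"
    using assms(3,4) by (fastforce intro: less_le_trans)
  moreover have "incseq (\<lambda>n. {s n..b})"
    using \<open>decseq s\<close> by (auto simp: incseq_def decseq_def intro: order_trans)
  moreover have "range (\<lambda>n. {s n..b}) \<subseteq> sets \<mu>"
    by (simp add: assms(1) image_subset_iff)
  ultimately show ?thesis
    using SUP_emeasure_incseq[of "\<lambda>n. {s n..b}" \<mu>] by simp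
qed

lemma nn_integral_powr_substitution_Icc:
  fixes h :: "real \<Rightarrow> real" and a r :: real
  assumes [measurable]: "h \<in> borel_measurable borel" and "0 < r" "0 < a" "a \<le> 1"
  shows "(\<integral>\<^sup>+y. ennreal (h y) * indicator {a powr r..1} y \<partial>lborel)
       = (\<integral>\<^sup>+x. ennreal (h (x powr r) * (r * x powr (r - 1))) * indicator {a..1} x \<partial>lborel)"
proof -
  have "(\<integral>\<^sup>+y. ennreal (h y) * indicator {a powr r..1} y \<partial>lborel)
      = (\<integral>\<^sup>+y. h y * indicator {a powr r..1 powr r} y \<partial>lborel)"
    by (auto intro!: nn_integral_cong split: split_indicator)
  also have "\<dots> = (\<integral>\<^sup>+x. h (x powr r) * (r * x powr (r - 1)) * indicator {a..1} x \<partial>lborel)"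
  proof (rule nn_integral_substitution)
    show "((\<lambda>x. x powr r) has_real_derivative r * x powr (r - 1)) (at x)" if "x \<in> {a..1}" for x
      using that \<open>0 < a\<close> by (auto intro!: derivative_eq_intros)
    show "continuous_on {a..1} (\<lambda>x. r * x powr (r - 1))"
      using \<open>0 < a\<close> by (intro continuous_intros) auto
  qed (use assms in \<open>auto simp: set_borel_measurable_def\<close>)
  also have "\<dots> = (\<integral>\<^sup>+x. ennreal (h (x powr r) * (r * x powr (r - 1))) * indicator {a..1} x \<partial>lborel)"
    by (auto intro!: nn_integral_cong split: split_indicator)
  finally show ?thesis .
qed

text \<open>For r < 1 the map x powr r is not differentiable at 0, so the substitution rule is
  applied on [a, 1] and a is let tend to 0.\<close>

lemma nn_integral_powr_substitution:
  fixes h :: "real \<Rightarrow> real" and r :: real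
  assumes [measurable]: "h \<in> borel_measurable borel" and r: "0 < r"
  shows "(\<integral>\<^sup>+y. ennreal (h y) * indicator {0<..1} y \<partial>lborel)
       = (\<integral>\<^sup>+x. ennreal (h (x powr r) * (r * x powr (r - 1))) * indicator {0<..1} x \<partial>lborel)"
proof -
  define H where "H x = h (x powr r) * (r * x powr (r - 1))" for x
  define t where "t n = 1 / real (Suc n)" for n
  define s where "s n = t n powr (1 / r)" for n
  have t_pos: "0 < t n" for n
    by (simp add: t_def)
  have s_pos: "0 < s n" and s_le_1: "s n \<le> 1" for n
    using r by (auto simp: s_def t_def intro!: powr_le1)
  have s_powr: "s n powr r = t n" for n
    using t_pos[of n] r by (simp add: s_def powr_powr)
  have "decseq t"
    by (auto simp: decseq_def t_def intro!: divide_left_mono)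
  then have "decseq s"
    using t_pos[THEN less_imp_le] r by (auto simp: decseq_def s_def intro!: powr_mono2)
  have t_small: "\<exists>n. t n \<le> x" if "0 < x" for x
    using reals_Archimedean[OF that] by (auto simp: t_def inverse_eq_divide intro: less_imp_le)
  have s_small: "\<exists>n. s n \<le> x" if x: "0 < x" for x
  proof -
    obtain n where "t n \<le> x powr r"
      using t_small[of "x powr r"] x by auto
    then have "s n \<le> (x powr r) powr (1 / r)"
      using t_pos[of n] r unfolding s_def by (intro powr_mono2) auto
    then show ?thesis
      using x r by (auto simp: powr_powr)
  qed
  have [measurable]: "H \<in> borel_measurable borel"
    unfolding H_def by measurable
  have "(\<integral>\<^sup>+y. ennreal (h y) * indicator {0<..1} y \<partial>lborel)
      = emeasure (density lborel h) {0<..1}"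
    by (simp add: emeasure_density)
  also have "\<dots> = (SUP n. emeasure (density lborel h) {t n..1})"
    by (rule emeasure_Ioc_eq_SUP) (use \<open>decseq t\<close> t_pos t_small in auto)
  also have "\<dots> = (SUP n. emeasure (density lborel H) {s n..1})"
    using nn_integral_powr_substitution_Icc[OF _ r s_pos s_le_1]
    by (simp add: emeasure_density s_powr H_def)
  also have "\<dots> = emeasure (density lborel H) {0<..1}"
    by (rule emeasure_Ioc_eq_SUP[symmetric]) (use \<open>decseq s\<close> s_pos s_small in auto)
  also have "\<dots> = (\<integral>\<^sup>+x. ennreal (H x) * indicator {0<..1} x \<partial>lborel)"
    by (simp add: emeasure_density)
  finally show ?thesis
    by (simp add: H_def)
qed

lemma distributed_powr_unit_interval:
  fixes X :: "'a \<Rightarrow> real" and f :: "real \<Rightarrow> real" and r :: real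
  assumes X: "distributed M lborel X (\<lambda>y. ennreal (f y))"
    and f_meas [measurable]: "f \<in> borel_measurable borel"
    and f_vanishes: "\<And>y. y \<notin> {0<..1} \<Longrightarrow> f y = 0"
    and r: "0 < r"
  shows "distributed M lborel (\<lambda>\<omega>. X \<omega> powr (1 / r))
           (\<lambda>x. ennreal (indicator {0<..1} x * (f (x powr r) * (r * x powr (r - 1)))))"
proof -
  have [measurable]: "X \<in> borel_measurable M"
    using distributed_measurable[OF X] by simp
  have "distr M lborel (\<lambda>\<omega>. X \<omega> powr (1 / r))
      = density lborel (\<lambda>x. ennreal (indicator {0<..1} x * (f (x powr r) * (r * x powr (r - 1)))))"
  proof (rule measure_eqI)
    fix A assume "A \<in> sets (distr M lborel (\<lambda>\<omega>. X \<omega> powr (1 / r)))"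
    then have A [measurable]: "A \<in> sets borel"
      by simp
    have "emeasure (distr M lborel (\<lambda>\<omega>. X \<omega> powr (1 / r))) A
        = emeasure M (X -` {y. y powr (1 / r) \<in> A} \<inter> space M)"
      by (simp add: emeasure_distr vimage_def Int_def)
    also have "\<dots> = (\<integral>\<^sup>+y. ennreal (f y) * indicator {y. y powr (1 / r) \<in> A} y \<partial>lborel)"
      by (rule distributed_emeasure[OF X]) measurable
    also have "\<dots> = (\<integral>\<^sup>+y. ennreal (f y * indicator A (y powr (1 / r))) * indicator {0<..1} y \<partial>lborel)"
      by (intro nn_integral_cong) (auto simp: f_vanishes split: split_indicator)
    also have "\<dots> = (\<integral>\<^sup>+x. ennreal (f (x powr r) * indicator A ((x powr r) powr (1 / r))
                          * (r * x powr (r - 1))) * indicator {0<..1} x \<partial>lborel)"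
      by (rule nn_integral_powr_substitution[OF _ r]) measurable
    also have "\<dots> = (\<integral>\<^sup>+x. ennreal (indicator {0<..1} x * (f (x powr r) * (r * x powr (r - 1))))
                          * indicator A x \<partial>lborel)"
      using r by (intro nn_integral_cong) (auto simp: powr_powr split: split_indicator)
    also have "\<dots> = emeasure (density lborel
                       (\<lambda>x. ennreal (indicator {0<..1} x * (f (x powr r) * (r * x powr (r - 1)))))) A"
      by (simp add: emeasure_density)
    finally show "emeasure (distr M lborel (\<lambda>\<omega>. X \<omega> powr (1 / r))) A = emeasure (density lborel
        (\<lambda>x. ennreal (indicator {0<..1} x * (f (x powr r) * (r * x powr (r - 1)))))) A" .
  qed simp
  then show ?thesis
    unfolding distributed_def by simp
qed

section \<open>Rejection sampling\<close>

lemma (in prob_space) indep_vars_case_sum_pairs: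
  fixes U Z :: "'i \<Rightarrow> 'a \<Rightarrow> 'b"
  assumes "indep_vars (\<lambda>_. N) (case_sum U Z) UNIV"
  shows "indep_vars (\<lambda>_. N \<Otimes>\<^sub>M N) (\<lambda>i \<omega>. (U i \<omega>, Z i \<omega>)) UNIV"
proof -
  define K where "K i = {Inl i, Inr i :: 'i + 'i}" for i
  have "indep_vars (\<lambda>i. PiM (K i) (\<lambda>_. N)) (\<lambda>i \<omega>. restrict (\<lambda>j. case_sum U Z j \<omega>) (K i)) UNIV"
    by (rule indep_vars_restrict[OF assms]) (auto simp: K_def disjoint_family_on_def)
  then have "indep_vars (\<lambda>_. N \<Otimes>\<^sub>M N)
      (\<lambda>i \<omega>. (\<lambda>h. (h (Inl i), h (Inr i))) (restrict (\<lambda>j. case_sum U Z j \<omega>) (K i))) UNIV"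
    by (rule indep_vars_compose2) (auto simp: K_def)
  then show ?thesis
    by (simp add: K_def)
qed

lemma (in prob_space) indep_var_case_sum:
  fixes U Z :: "'i \<Rightarrow> 'a \<Rightarrow> 'b"
  assumes "indep_vars (\<lambda>_. N) (case_sum U Z) UNIV"
  shows "indep_var N (U i) N (Z i)"
proof -
  have "indep_var (PiM {Inl i} (\<lambda>_. N)) (\<lambda>\<omega>. restrict (\<lambda>j. case_sum U Z j \<omega>) {Inl i})
                  (PiM {Inr i} (\<lambda>_. N)) (\<lambda>\<omega>. restrict (\<lambda>j. case_sum U Z j \<omega>) {Inr i})"
    by (rule indep_var_restrict[OF assms]) auto
  then have "indep_var N ((\<lambda>h. h (Inl i)) \<circ> (\<lambda>\<omega>. restrict (\<lambda>j. case_sum U Z j \<omega>) {Inl i}))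
                       N ((\<lambda>h. h (Inr i)) \<circ> (\<lambda>\<omega>. restrict (\<lambda>j. case_sum U Z j \<omega>) {Inr i}))"
    by (rule indep_var_compose) auto
  then show ?thesis
    by (simp add: comp_def)
qed

lemma (in prob_space) indep_vars_case_sum_compose:
  fixes U Y :: "'i \<Rightarrow> 'a \<Rightarrow> real"
  assumes "indep_vars (\<lambda>_. borel) (case_sum U Y) UNIV" and "h \<in> borel_measurable borel"
  shows "indep_vars (\<lambda>_. borel) (case_sum U (\<lambda>i \<omega>. h (Y i \<omega>))) UNIV"
proof -
  have "indep_vars (\<lambda>_. borel) (\<lambda>i \<omega>. case_sum (\<lambda>_. id) (\<lambda>_. h) i (case_sum U Y i \<omega>)) UNIV"
    by (rule indep_vars_compose2[OF assms(1)]) (use assms(2) in \<open>auto split: sum.split\<close>)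
  also have "(\<lambda>i \<omega>. case_sum (\<lambda>_. id) (\<lambda>_. h) i (case_sum U Y i \<omega>)) = case_sum U (\<lambda>i \<omega>. h (Y i \<omega>))"
    by (auto simp: fun_eq_iff split: sum.split)
  finally show ?thesis .
qed

lemma (in prob_space) uniform01_atMost:
  assumes "distributed M lborel X (\<lambda>x. ennreal (uniform01_density x))"
  shows "emeasure M (X -` {..t} \<inter> space M) = ennreal (max 0 (min 1 t))"
proof -
  have "emeasure M (X -` {..t} \<inter> space M)
      = (\<integral>\<^sup>+x. ennreal (uniform01_density x) * indicator {..t} x \<partial>lborel)"
    by (rule distributed_emeasure[OF assms]) simp
  also have "\<dots> = (\<integral>\<^sup>+x. indicator ({0<..<1} \<inter> {..t}) x \<partial>lborel)"
    by (rule nn_integral_cong) (simp add: uniform01_density_def split: split_indicator)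
  also have "\<dots> = emeasure lborel ({0<..<1} \<inter> {..t})"
    by (rule nn_integral_indicator) simp
  also have "\<dots> = ennreal (max 0 (min 1 t))"
  proof (cases "t \<le> 0 \<or> 1 \<le> t")
    case True
    then have "{0<..<1} \<inter> {..t} = (if t \<le> 0 then {} else {0<..<1::real})"
      by auto
    with True show ?thesis
      by (auto simp: ennreal_neg)
  next
    case False
    then have "{0<..<1} \<inter> {..t} = {0<..t}"
      by auto
    with False show ?thesis
      by simp
  qed
  finally show ?thesis .
qed

lemma (in prob_space) emeasure_uniform_le_indep:
  fixes U Z :: "'a \<Rightarrow> real" and h :: "real \<Rightarrow> real"
  assumes indep: "indep_var borel U borel Z"
    and U: "distributed M lborel U (\<lambda>x. ennreal (uniform01_density x))"
    and [measurable]: "Z \<in> borel_measurable M" "h \<in> borel_measurable borel" "A \<in> sets borel"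
  shows "emeasure M {\<omega> \<in> space M. U \<omega> \<le> h (Z \<omega>) \<and> Z \<omega> \<in> A}
       = (\<integral>\<^sup>+\<omega>. ennreal (max 0 (min 1 (h (Z \<omega>)))) * indicator A (Z \<omega>) \<partial>M)"
proof -
  have [measurable]: "U \<in> borel_measurable M"
    using distributed_measurable[OF U] by simp
  define S where "S = {x \<in> space (borel \<Otimes>\<^sub>M borel). fst x \<le> h (snd x) \<and> snd x \<in> A}"
  have [measurable]: "S \<in> sets (borel \<Otimes>\<^sub>M borel)"
    unfolding S_def by measurable
  have "{\<omega> \<in> space M. U \<omega> \<le> h (Z \<omega>) \<and> Z \<omega> \<in> A} = (\<lambda>\<omega>. (U \<omega>, Z \<omega>)) -` S \<inter> space M"
    by (auto simp: S_def space_pair_measure)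
  then have "emeasure M {\<omega> \<in> space M. U \<omega> \<le> h (Z \<omega>) \<and> Z \<omega> \<in> A}
      = emeasure (distr M (borel \<Otimes>\<^sub>M borel) (\<lambda>\<omega>. (U \<omega>, Z \<omega>))) S"
    by (simp add: emeasure_distr)
  also have "\<dots> = emeasure (distr M borel U \<Otimes>\<^sub>M distr M borel Z) S"
    using indep by (simp add: indep_var_distribution_eq)
  also have "\<dots> = (\<integral>\<^sup>+z. emeasure (distr M borel U) ((\<lambda>u. (u, z)) -` S) \<partial>distr M borel Z)"
  proof -
    interpret U_dist: prob_space "distr M borel U"
      by (rule prob_space_distr) simp
    interpret Z_dist: prob_space "distr M borel Z"
      by (rule prob_space_distr) simp
    interpret pair_prob_space "distr M borel U" "distr M borel Z" ..
    show ?thesis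
      by (rule emeasure_pair_measure_alt2) simp
  qed
  also have "\<dots> = (\<integral>\<^sup>+z. ennreal (max 0 (min 1 (h z))) * indicator A z \<partial>distr M borel Z)"
  proof (rule nn_integral_cong)
    fix z
    have "(\<lambda>u. (u, z)) -` S = (if z \<in> A then {..h z} else {})"
      by (auto simp: S_def space_pair_measure)
    then show "emeasure (distr M borel U) ((\<lambda>u. (u, z)) -` S) = ennreal (max 0 (min 1 (h z))) * indicator A z"
      by (simp add: emeasure_distr uniform01_atMost[OF U] split: split_indicator)
  qed
  also have "\<dots> = (\<integral>\<^sup>+\<omega>. ennreal (max 0 (min 1 (h (Z \<omega>)))) * indicator A (Z \<omega>) \<partial>M)"
    by (simp add: nn_integral_distr)
  finally show ?thesis .
qed

lemma (in prob_space) nn_integral_density_eq_1: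
  assumes "distributed M lborel X (\<lambda>x. ennreal (f x))"
  shows "(\<integral>\<^sup>+x. ennreal (f x) \<partial>lborel) = 1"
  using distributed_emeasure[OF assms, of UNIV] by (simp add: emeasure_space_1)

locale rejection_sampling = prob_space M for M :: "'a measure" +
  fixes U Z :: "nat \<Rightarrow> 'a \<Rightarrow> real" and g f \<phi> :: "real \<Rightarrow> real" and q :: real
  assumes indep: "indep_vars (\<lambda>_. borel) (case_sum U Z) UNIV"
    and U_uniform: "\<And>n. distributed M lborel (U n) (\<lambda>x. ennreal (uniform01_density x))"
    and Z_distributed: "\<And>n. distributed M lborel (Z n) (\<lambda>x. ennreal (g x))"
    and \<phi>_measurable [measurable]: "\<phi> \<in> borel_measurable borel"
    and f_measurable [measurable]: "f \<in> borel_measurable borel"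
    \<comment> \<open>\<phi> is only constrained where g \<noteq> 0: phi2 exceeds 1 on negative reals, where g2 vanishes\<close>
    and \<phi>_range: "\<And>x. g x \<noteq> 0 \<Longrightarrow> 0 \<le> \<phi> x \<and> \<phi> x \<le> 1"
    and envelope: "\<And>x. g x * \<phi> x = q * f x"
    and f_prob: "(\<integral>\<^sup>+x. ennreal (f x) \<partial>lborel) = 1"
    and q_pos: "0 < q"
begin

definition accepted :: "nat \<Rightarrow> 'a \<Rightarrow> bool" where
  "accepted n \<omega> \<longleftrightarrow> U n \<omega> \<le> \<phi> (Z n \<omega>)"

definition first_accepted_in :: "nat \<Rightarrow> real set \<Rightarrow> 'a set" where
  "first_accepted_in k A = {\<omega> \<in> space M. (\<forall>j<k. \<not> accepted j \<omega>) \<and> accepted k \<omega> \<and> Z k \<omega> \<in> A}"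

definition sample :: "'a \<Rightarrow> real" where
  "sample \<omega> = Z (LEAST n. accepted n \<omega>) \<omega>"

lemma U_measurable [measurable]: "U n \<in> borel_measurable M"
  using distributed_measurable[OF U_uniform] by simp

lemma Z_measurable [measurable]: "Z n \<in> borel_measurable M"
  using distributed_measurable[OF Z_distributed] by simp

lemma accepted_measurable [measurable]: "Measurable.pred M (accepted n)"
  unfolding accepted_def by measurable

lemma first_accepted_in_sets [measurable]:
  assumes [measurable]: "A \<in> sets borel"
  shows "first_accepted_in k A \<in> sets M"
  unfolding first_accepted_in_def by measurable

lemma sample_measurable [measurable]: "sample \<in> borel_measurable M"
proof -
  have "(\<lambda>\<omega>. LEAST n. accepted n \<omega>) \<in> measurable M (count_space UNIV)"
    by measurable
  then show ?thesis
    unfolding sample_def by (rule measurable_compose_countable[rotated]) simp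
qed

lemma envelope_clamped: "ennreal (g x) * ennreal (max 0 (min 1 (\<phi> x))) = ennreal q * ennreal (f x)"
proof -
  have "ennreal (g x) * ennreal (max 0 (min 1 (\<phi> x))) = ennreal (g x * max 0 (min 1 (\<phi> x)))"
    by (rule ennreal_mult''[symmetric]) simp
  also have "g x * max 0 (min 1 (\<phi> x)) = q * f x"
    using \<phi>_range[of x] envelope[of x] by (cases "g x = 0") auto
  also have "ennreal (q * f x) = ennreal q * ennreal (f x)"
    using q_pos by (simp add: ennreal_mult')
  finally show ?thesis .
qed

lemma emeasure_accepted_in:
  assumes [measurable]: "A \<in> sets borel"
  shows "emeasure M {\<omega> \<in> space M. accepted n \<omega> \<and> Z n \<omega> \<in> A}
       = ennreal q * emeasure (density lborel f) A"
proof -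
  have "emeasure M {\<omega> \<in> space M. accepted n \<omega> \<and> Z n \<omega> \<in> A}
      = (\<integral>\<^sup>+\<omega>. ennreal (max 0 (min 1 (\<phi> (Z n \<omega>)))) * indicator A (Z n \<omega>) \<partial>M)"
    unfolding accepted_def
    by (rule emeasure_uniform_le_indep[OF indep_var_case_sum[OF indep] U_uniform]) measurable
  also have "\<dots> = (\<integral>\<^sup>+x. ennreal (g x) * (ennreal (max 0 (min 1 (\<phi> x))) * indicator A x) \<partial>lborel)"
    by (rule distributed_nn_integral[OF Z_distributed, symmetric]) simp
  also have "\<dots> = (\<integral>\<^sup>+x. ennreal q * (ennreal (f x) * indicator A x) \<partial>lborel)"
    by (simp only: mult.assoc[symmetric] envelope_clamped)
  also have "\<dots> = ennreal q * emeasure (density lborel f) A"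
    by (simp add: nn_integral_cmult emeasure_density)
  finally show ?thesis .
qed

lemma prob_accepted: "prob {\<omega> \<in> space M. accepted n \<omega>} = q"
proof -
  have "emeasure M {\<omega> \<in> space M. accepted n \<omega>} = ennreal q"
    using emeasure_accepted_in[of UNIV n] f_prob by (simp add: emeasure_density)
  then show ?thesis
    using q_pos by (simp add: emeasure_eq_measure)
qed

lemma q_le_1: "q \<le> 1"
  using prob_accepted[of 0] prob_le_1[of "{\<omega> \<in> space M. accepted 0 \<omega>}"] by simp

lemma prob_rejected: "prob {\<omega> \<in> space M. \<not> accepted n \<omega>} = 1 - q"
proof -
  have "{\<omega> \<in> space M. \<not> accepted n \<omega>} = space M - {\<omega> \<in> space M. accepted n \<omega>}"
    by auto
  then show ?thesis
    using prob_compl[of "{\<omega> \<in> space M. accepted n \<omega>}"] prob_accepted by simp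
qed

definition pair_events :: "nat \<Rightarrow> 'a set set" where
  "pair_events n = {(\<lambda>\<omega>. (U n \<omega>, Z n \<omega>)) -` S \<inter> space M | S. S \<in> sets (borel \<Otimes>\<^sub>M borel)}"

lemma indep_pair_events: "indep_sets pair_events UNIV"
  using indep_vars_case_sum_pairs[OF indep] unfolding indep_vars_def2 pair_events_def by simp

lemma pred_in_pair_events:
  assumes "Measurable.pred (borel \<Otimes>\<^sub>M borel) P"
  shows "{\<omega> \<in> space M. P (U n \<omega>, Z n \<omega>)} \<in> pair_events n"
  using assms unfolding pair_events_def pred_def
  by (auto simp: space_pair_measure intro!: exI[of _ "{x \<in> space (borel \<Otimes>\<^sub>M borel). P x}"])

lemma prob_first_accepted_in:
  assumes [measurable]: "A \<in> sets borel"
  shows "prob (first_accepted_in k A)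
       = (1 - q) ^ k * prob {\<omega> \<in> space M. accepted k \<omega> \<and> Z k \<omega> \<in> A}"
proof -
  define B where "B j = (if j < k then {\<omega> \<in> space M. \<not> accepted j \<omega>}
                         else {\<omega> \<in> space M. accepted k \<omega> \<and> Z k \<omega> \<in> A})" for j
  have first_eq: "first_accepted_in k A = (\<Inter>j\<in>{..k}. B j)"
  proof (intro equalityI subsetI)
    fix \<omega> assume "\<omega> \<in> (\<Inter>j\<in>{..k}. B j)"
    then have B: "\<omega> \<in> B j" if "j \<le> k" for j
      using that by blast
    have "\<omega> \<in> space M" "accepted k \<omega>" "Z k \<omega> \<in> A"
      using B[of k] by (simp_all add: B_def)
    moreover have "\<not> accepted j \<omega>" if "j < k" for j
      using B[of j] that by (simp add: B_def)
    ultimately show "\<omega> \<in> first_accepted_in k A"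
      by (simp add: first_accepted_in_def)
  qed (auto simp: first_accepted_in_def B_def)
  have "B j \<in> pair_events j" if "j \<le> k" for j
    using that pred_in_pair_events[of "\<lambda>x. \<not> fst x \<le> \<phi> (snd x)" j]
      pred_in_pair_events[of "\<lambda>x. fst x \<le> \<phi> (snd x) \<and> snd x \<in> A" k]
    by (auto simp: B_def accepted_def)
  then have "prob (first_accepted_in k A) = (\<Prod>j\<in>{..k}. prob (B j))"
    unfolding first_eq by (intro indep_setsD[OF indep_pair_events]) auto
  also have "\<dots> = (\<Prod>j<k. prob (B j)) * prob (B k)"
    by (simp add: lessThan_Suc_atMost[symmetric])
  also have "(\<Prod>j<k. prob (B j)) = (\<Prod>j<k. 1 - q)"
    by (intro prod.cong) (auto simp: B_def prob_rejected)
  finally show ?thesis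
    by (simp add: B_def)
qed

lemma emeasure_first_accepted_in:
  assumes [measurable]: "A \<in> sets borel"
  shows "emeasure M (first_accepted_in k A) = ennreal ((1 - q) ^ k * q) * emeasure (density lborel f) A"
proof -
  have "emeasure M (first_accepted_in k A)
      = ennreal ((1 - q) ^ k) * emeasure M {\<omega> \<in> space M. accepted k \<omega> \<and> Z k \<omega> \<in> A}"
    using q_le_1 by (simp add: emeasure_eq_measure prob_first_accepted_in ennreal_mult)
  then show ?thesis
    using q_pos q_le_1 by (simp add: emeasure_accepted_in ennreal_mult mult.assoc)
qed

lemma disjoint_family_first_accepted_in: "disjoint_family (\<lambda>k. first_accepted_in k A)"
  unfolding disjoint_family_on_def first_accepted_in_def
  by (auto dest: linorder_neqE_nat)

lemma emeasure_UN_first_accepted_in: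
  assumes [measurable]: "A \<in> sets borel"
  shows "emeasure M (\<Union>k. first_accepted_in k A) = emeasure (density lborel f) A"
proof -
  have "(\<Sum>k. (1 - q) ^ k * q) = 1"
    using q_pos q_le_1 suminf_geometric[of "1 - q"] by (simp add: suminf_mult2[symmetric])
  moreover have "(\<Sum>k. ennreal ((1 - q) ^ k * q)) = ennreal (\<Sum>k. (1 - q) ^ k * q)"
    using q_pos q_le_1 by (intro suminf_ennreal2) (auto intro!: summable_mult2 summable_geometric)
  ultimately have "(\<Sum>k. ennreal ((1 - q) ^ k * q)) = 1"
    by simp
  have "emeasure M (\<Union>k. first_accepted_in k A) = (\<Sum>k. emeasure M (first_accepted_in k A))"
    by (intro suminf_emeasure[symmetric] disjoint_family_first_accepted_in) auto
  also have "\<dots> = (\<Sum>k. ennreal ((1 - q) ^ k * q)) * emeasure (density lborel f) A"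
    by (simp add: emeasure_first_accepted_in ennreal_suminf_multc)
  finally show ?thesis
    using \<open>(\<Sum>k. ennreal ((1 - q) ^ k * q)) = 1\<close> by simp
qed

lemma AE_accepted: "AE \<omega> in M. \<exists>n. accepted n \<omega>"
proof -
  have "emeasure M (\<Union>k. first_accepted_in k UNIV) = 1"
    using f_prob by (simp add: emeasure_UN_first_accepted_in emeasure_density)
  then have "AE \<omega> in M. \<omega> \<in> (\<Union>k. first_accepted_in k UNIV)"
    by (intro AE_prob_1) (simp add: emeasure_eq_measure)
  then show ?thesis
    by (rule AE_mp) (auto simp: first_accepted_in_def intro!: AE_I2)
qed

lemma sample_in_iff_first_accepted_in:
  assumes "\<omega> \<in> space M" "\<exists>n. accepted n \<omega>"
  shows "sample \<omega> \<in> A \<longleftrightarrow> \<omega> \<in> (\<Union>k. first_accepted_in k A)"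
proof -
  define k where "k = (LEAST n. accepted n \<omega>)"
  have k: "accepted k \<omega>" "\<And>j. j < k \<Longrightarrow> \<not> accepted j \<omega>"
    unfolding k_def using assms(2) by (auto intro: LeastI_ex dest: not_less_Least)
  have k_unique: "j = k" if "accepted j \<omega>" "\<forall>i<j. \<not> accepted i \<omega>" for j
    using k that by (meson linorder_neqE_nat)
  have "\<omega> \<in> first_accepted_in j A \<longleftrightarrow> j = k \<and> Z k \<omega> \<in> A" for j
    using k k_unique assms(1) unfolding first_accepted_in_def by blast
  then show ?thesis
    by (simp add: sample_def k_def[symmetric])
qed

lemma distributed_sample: "distributed M lborel sample (\<lambda>x. ennreal (f x))"
proof -
  have "distr M lborel sample = density lborel f"
  proof (rule measure_eqI)
    fix A assume "A \<in> sets (distr M lborel sample)"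
    then have [measurable]: "A \<in> sets borel"
      by simp
    have "emeasure (distr M lborel sample) A = emeasure M (sample -` A \<inter> space M)"
      by (simp add: emeasure_distr)
    also have "\<dots> = emeasure M (\<Union>k. first_accepted_in k A)"
      by (rule emeasure_eq_AE) (use AE_accepted sample_in_iff_first_accepted_in in auto)
    also have "\<dots> = emeasure (density lborel f) A"
      by (rule emeasure_UN_first_accepted_in) simp
    finally show "emeasure (distr M lborel sample) A = emeasure (density lborel f) A" .
  qed simp
  then show ?thesis
    by (simp add: distributed_def)
qed

end

section \<open>Algorithm 2\<close>

definition K2_integrand :: "real \<Rightarrow> real \<Rightarrow> real \<Rightarrow> real" where
  "K2_integrand \<alpha> p x = indicator {0<..<1} x * ((exp (- (x powr p)) - exp (- x)) * x powr (- \<alpha> - 1))"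

lemma K2_eq_integral: "K2 \<alpha> p = integral\<^sup>L lborel (K2_integrand \<alpha> p)"
  by (simp add: K2_def K2_integrand_def[abs_def] set_lebesgue_integral_def)

lemma f2_eq: "f2 \<alpha> p x = K2_integrand \<alpha> p x / K2 \<alpha> p"
  by (simp add: f2_def K2_integrand_def)

lemma inverse_V2_eq: "1 / V2 \<alpha> p = K2 \<alpha> p * ((p - \<alpha>) * (1 - \<alpha>) / (p - 1))"
  by (simp add: V2_def)

lemma g2_measurable [measurable]: "g2 \<alpha> p \<in> borel_measurable borel"
  unfolding g2_def by measurable

lemma f2_measurable [measurable]: "f2 \<alpha> p \<in> borel_measurable borel"
  unfolding f2_def by measurable

lemma phi2_measurable [measurable]: "phi2 p \<in> borel_measurable borel"
  unfolding phi2_def by measurable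

lemma g2_vanishes: "x \<notin> {0<..<1} \<Longrightarrow> g2 \<alpha> p x = 0"
  by (cases "x = 1") (auto simp: g2_def)

lemma powr_diff_eq:
  fixes x \<alpha> p :: real
  assumes "0 < x"
  shows "(x - x powr p) * x powr (- \<alpha> - 1) = x powr (- \<alpha>) * (1 - x powr (p - 1))"
proof -
  have "x * x powr (- \<alpha> - 1) = x powr (- \<alpha>)"
    using assms by (simp add: powr_mult_base)
  moreover have "x powr p * x powr (- \<alpha> - 1) = x powr (- \<alpha>) * x powr (p - 1)"
    by (simp add: algebra_simps flip: powr_add)
  ultimately show ?thesis
    by (simp add: algebra_simps)
qed

context
  fixes \<alpha> p :: real
  assumes \<alpha>: "0 \<le> \<alpha>" "\<alpha> < 1" and p: "1 < p"
begin

lemma g2_eq_beta_density_powr: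
  "g2 \<alpha> p x = indicator {0<..1} x *
     (beta_density ((1 - \<alpha>) / (p - 1)) 2 (x powr (p - 1)) * ((p - 1) * x powr (p - 1 - 1)))"
proof (cases "0 < x \<and> x < 1")
  case True
  define b where "b = (1 - \<alpha>) / (p - 1)"
  have b: "0 < b" "(p - 1) * b = 1 - \<alpha>" "b + 1 = (p - \<alpha>) / (p - 1)"
    using \<alpha> p by (auto simp: b_def field_simps)
  have x_powr: "0 < x powr (p - 1)" "x powr (p - 1) < 1"
    using True p powr_less_mono2[of "p - 1" x 1] by auto
  have "(x powr (p - 1)) powr (b - 1) * x powr (p - 1 - 1) = x powr ((p - 1) * b - 1)"
    using True by (simp add: powr_powr flip: powr_add) (simp add: algebra_simps)
  also have "\<dots> = x powr (- \<alpha>)"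
    using b by simp
  finally have exponent: "(x powr (p - 1)) powr (b - 1) * x powr (p - 1 - 1) = x powr (- \<alpha>)" .
  have factor: "(p - 1) * (b * (b + 1)) = (p - \<alpha>) * (1 - \<alpha>) / (p - 1)"
    using b by (simp add: mult.assoc[symmetric])
  have "beta_density b 2 (x powr (p - 1))
      = (x powr (p - 1)) powr (b - 1) * (1 - x powr (p - 1)) * (b * (b + 1))"
    using x_powr b by (simp add: beta_density_def Beta_2)
  then have "indicator {0<..1} x * (beta_density b 2 (x powr (p - 1)) * ((p - 1) * x powr (p - 1 - 1)))
      = ((x powr (p - 1)) powr (b - 1) * x powr (p - 1 - 1)) * (1 - x powr (p - 1))
        * ((p - 1) * (b * (b + 1)))"
    using True by (simp only: indicator_simps greaterThanAtMost_iff mult_ac) simp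
  also have "\<dots> = g2 \<alpha> p x"
    unfolding exponent factor using True by (simp add: g2_def mult_ac)
  finally show ?thesis
    by (simp add: b_def)
next
  case False
  then show ?thesis
    by (cases "x = 1") (auto simp: g2_def beta_density_def)
qed

lemma distributed_beta_powr_g2:
  assumes "distributed M lborel Y (\<lambda>y. ennreal (beta_density ((1 - \<alpha>) / (p - 1)) 2 y))"
  shows "distributed M lborel (\<lambda>\<omega>. Y \<omega> powr (1 / (p - 1))) (\<lambda>x. ennreal (g2 \<alpha> p x))"
  unfolding g2_eq_beta_density_powr
  by (rule distributed_powr_unit_interval[OF assms]) (use p in \<open>auto simp: beta_density_def\<close>)

lemma phi2_range: "g2 \<alpha> p x \<noteq> 0 \<Longrightarrow> 0 \<le> phi2 p x \<and> phi2 p x \<le> 1"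
  using g2_vanishes[of x \<alpha> p] phi2_bounds[OF _ _ p, of x] exp_ge_zero[of "- 1"]
  by (meson greaterThanLessThan_iff order_trans)

lemma g2_nonneg: "0 \<le> g2 \<alpha> p x"
proof (cases "0 < x \<and> x \<le> 1")
  case True
  then have "x powr (p - 1) \<le> 1"
    using p by (intro powr_le1) auto
  moreover have "0 \<le> (p - \<alpha>) * (1 - \<alpha>) / (p - 1)"
    using \<alpha> p by simp
  ultimately show ?thesis
    using True unfolding g2_def by (intro mult_nonneg_nonneg) auto
qed (auto simp: g2_def)

lemma g2_pos: "0 < x \<Longrightarrow> x < 1 \<Longrightarrow> 0 < g2 \<alpha> p x"
  using \<alpha> p powr_less_mono2[of "p - 1" x 1] by (simp add: g2_def)

lemma g2_mult_phi2: "g2 \<alpha> p x * phi2 p x = (p - \<alpha>) * (1 - \<alpha>) / (p - 1) * K2_integrand \<alpha> p x"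
proof (cases "0 < x \<and> x < 1")
  case True
  have gap: "0 < x - x powr p"
    using True p powr_less_mono'[of x 1 p] by simp
  have "g2 \<alpha> p x * phi2 p x = (p - \<alpha>) * (1 - \<alpha>) / (p - 1) * (x powr (- \<alpha>) * (1 - x powr (p - 1)))
      * ((exp (- (x powr p)) - exp (- x)) / (x - x powr p))"
    using True by (simp add: g2_def phi2_def)
  also have "\<dots> = (p - \<alpha>) * (1 - \<alpha>) / (p - 1) * ((x - x powr p) * x powr (- \<alpha> - 1))
      * ((exp (- (x powr p)) - exp (- x)) / (x - x powr p))"
    using True by (simp only: powr_diff_eq)
  also have "\<dots> = (p - \<alpha>) * (1 - \<alpha>) / (p - 1) * K2_integrand \<alpha> p x"
    using True gap by (simp add: K2_integrand_def)
  finally show ?thesis .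
next
  case False
  then show ?thesis
    by (simp add: g2_vanishes K2_integrand_def)
qed

lemma g2_mult_phi2_nonneg: "0 \<le> g2 \<alpha> p x * phi2 p x"
  using phi2_range[of x] g2_nonneg[of x] by (cases "g2 \<alpha> p x = 0") auto

lemma inverse_V2_eq_integral: "1 / V2 \<alpha> p = integral\<^sup>L lborel (\<lambda>x. g2 \<alpha> p x * phi2 p x)"
  unfolding g2_mult_phi2 inverse_V2_eq K2_eq_integral by simp

context
  assumes g2_prob: "(\<integral>\<^sup>+x. ennreal (g2 \<alpha> p x) \<partial>lborel) = 1"
begin

lemma g2_integrable: "integrable lborel (g2 \<alpha> p)"
  using g2_prob by (intro integrableI_nonneg) (auto simp: g2_nonneg)

lemma integral_g2: "integral\<^sup>L lborel (g2 \<alpha> p) = 1"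
  using nn_integral_eq_integral[OF g2_integrable] g2_prob g2_nonneg by simp

lemma g2_mult_phi2_integrable: "integrable lborel (\<lambda>x. g2 \<alpha> p x * phi2 p x)"
proof (rule Bochner_Integration.integrable_bound[OF g2_integrable])
  show "AE x in lborel. norm (g2 \<alpha> p x * phi2 p x) \<le> norm (g2 \<alpha> p x)"
  proof (intro AE_I2)
    fix x
    show "norm (g2 \<alpha> p x * phi2 p x) \<le> norm (g2 \<alpha> p x)"
      using phi2_range[of x] g2_nonneg[of x]
      by (cases "g2 \<alpha> p x = 0") (auto simp: abs_mult mult_left_le)
  qed
qed simp

lemma inverse_V2_ge_exp: "exp (- 1) \<le> 1 / V2 \<alpha> p"
proof -
  have "exp (- 1) = integral\<^sup>L lborel (\<lambda>x. exp (- 1) * g2 \<alpha> p x)"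
    by (simp add: integral_g2)
  also have "\<dots> \<le> integral\<^sup>L lborel (\<lambda>x. g2 \<alpha> p x * phi2 p x)"
  proof (intro integral_mono g2_mult_phi2_integrable)
    show "integrable lborel (\<lambda>x. exp (- 1) * g2 \<alpha> p x)"
      using g2_integrable by simp
    show "exp (- 1) * g2 \<alpha> p x \<le> g2 \<alpha> p x * phi2 p x" for x
    proof (cases "0 < x \<and> x < 1")
      case True
      then show ?thesis
        using True mult_right_mono[OF phi2_bounds(1)[of x p] g2_nonneg[of x]] p
        by (simp add: mult.commute)
    qed (simp add: g2_vanishes)
  qed
  finally show ?thesis
    by (simp add: inverse_V2_eq_integral)
qed

lemma V2_pos: "0 < V2 \<alpha> p"
proof -
  have "0 < 1 / V2 \<alpha> p"
    using inverse_V2_ge_exp exp_gt_zero[of "- 1"] by linarith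
  then show ?thesis
    by simp
qed

lemma g2_mult_phi2_eq_f2: "g2 \<alpha> p x * phi2 p x = 1 / V2 \<alpha> p * f2 \<alpha> p x"
proof -
  have "K2 \<alpha> p \<noteq> 0"
    using V2_pos by (auto simp: V2_def)
  then show ?thesis
    by (simp add: g2_mult_phi2 V2_def f2_eq)
qed

lemma nn_integral_f2: "(\<integral>\<^sup>+x. ennreal (f2 \<alpha> p x) \<partial>lborel) = 1"
proof -
  have f2: "f2 \<alpha> p x = V2 \<alpha> p * (g2 \<alpha> p x * phi2 p x)" for x
    using V2_pos by (simp add: g2_mult_phi2_eq_f2)
  have "(\<integral>\<^sup>+x. ennreal (f2 \<alpha> p x) \<partial>lborel)
      = ennreal (integral\<^sup>L lborel (\<lambda>x. V2 \<alpha> p * (g2 \<alpha> p x * phi2 p x)))"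
    unfolding f2 using V2_pos g2_mult_phi2_nonneg
    by (intro nn_integral_eq_integral integrable_mult_right g2_mult_phi2_integrable AE_I2) simp
  also have "\<dots> = 1"
    using V2_pos by (simp add: inverse_V2_eq_integral[symmetric])
  finally show ?thesis .
qed

lemma f2_envelope:
  assumes "x \<in> {0<..<1}"
  shows "f2 \<alpha> p x \<le> V2 \<alpha> p * g2 \<alpha> p x \<and> f2 \<alpha> p x / (V2 \<alpha> p * g2 \<alpha> p x) = phi2 p x \<and>
         0 \<le> phi2 p x \<and> phi2 p x \<le> 1"
proof -
  have x: "0 < x" "x < 1"
    using assms by auto
  define envelope where "envelope = V2 \<alpha> p * g2 \<alpha> p x"
  have "0 < envelope"
    using V2_pos g2_pos[OF x] by (simp add: envelope_def)
  moreover have "f2 \<alpha> p x = envelope * phi2 p x"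
    using g2_mult_phi2_eq_f2[of x] V2_pos by (simp add: envelope_def field_simps)
  moreover have "0 \<le> phi2 p x" "phi2 p x \<le> 1"
    using phi2_bounds[OF x p] exp_ge_zero[of "- 1"] by linarith+
  ultimately show ?thesis
    unfolding envelope_def[symmetric] by (simp add: mult_left_le)
qed

end

end

theorem mainTheorem6:
  fixes M :: "'a measure" and \<alpha> p :: real
    and U Y :: "nat \<Rightarrow> 'a \<Rightarrow> real"
  assumes "prob_space M"
    and "0 \<le> \<alpha>" and "\<alpha> < 1" and "1 < p"
    and "prob_space.indep_vars M (\<lambda>_. borel) (\<lambda>i. case_sum U Y i) (UNIV :: (nat + nat) set)"
    and "\<And>n. distributed M lborel (U n) (\<lambda>x. ennreal (uniform01_density x))"
    and "\<And>n. distributed M lborel (Y n)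
                (\<lambda>y. ennreal (beta_density ((1 - \<alpha>) / (p - 1)) 2 y))"
  shows
    "let Z = (\<lambda>n \<omega>. Y n \<omega> powr (1 / (p - 1)));
         accept = (\<lambda>n \<omega>. U n \<omega> \<le> phi2 p (Z n \<omega>));
         output = (\<lambda>\<omega>. Z (LEAST n. accept n \<omega>) \<omega>)
     in
      \<comment> \<open>(a)\<close>
      (\<forall>n. distributed M lborel (Z n) (\<lambda>x. ennreal (g2 \<alpha> p x))) \<and>
      (\<forall>x\<in>{0<..<1}. f2 \<alpha> p x \<le> V2 \<alpha> p * g2 \<alpha> p x \<and>
                       f2 \<alpha> p x / (V2 \<alpha> p * g2 \<alpha> p x) = phi2 p x \<and>
                       0 \<le> phi2 p x \<and> phi2 p x \<le> 1) \<and>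
      \<comment> \<open>(b)\<close>
      (AE \<omega> in M. \<exists>n. accept n \<omega>) \<and>
      distributed M lborel output (\<lambda>x. ennreal (f2 \<alpha> p x)) \<and>
      \<comment> \<open>(c)\<close>
      (\<forall>n. measure M {\<omega> \<in> space M. accept n \<omega>} = 1 / V2 \<alpha> p) \<and>
      1 / V2 \<alpha> p = K2 \<alpha> p * ((p - \<alpha>) * (1 - \<alpha>) / (p - 1)) \<and>
      1 / V2 \<alpha> p \<ge> exp (- 1)"
proof -
  interpret prob_space M by fact
  note params = assms(2-4)
  define Z where "Z = (\<lambda>n \<omega>. Y n \<omega> powr (1 / (p - 1)))"
  have Z_distributed: "distributed M lborel (Z n) (\<lambda>x. ennreal (g2 \<alpha> p x))" for n
    unfolding Z_def by (rule distributed_beta_powr_g2[OF params assms(7)])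
  have g2_prob: "(\<integral>\<^sup>+x. ennreal (g2 \<alpha> p x) \<partial>lborel) = 1"
    by (rule nn_integral_density_eq_1[OF Z_distributed])
  have "indep_vars (\<lambda>_. borel) (case_sum U Z) UNIV"
    unfolding Z_def by (rule indep_vars_case_sum_compose[OF assms(5)]) simp
  moreover have "0 < 1 / V2 \<alpha> p"
    using V2_pos[OF params g2_prob] by simp
  ultimately interpret rejection_sampling M U Z "g2 \<alpha> p" "f2 \<alpha> p" "phi2 p" "1 / V2 \<alpha> p"
    using assms(6) Z_distributed phi2_range[OF params] g2_mult_phi2_eq_f2[OF params g2_prob]
      nn_integral_f2[OF params g2_prob]
    by unfold_locales simp_all
  show ?thesis
    unfolding Z_def[symmetric] Let_def accepted_def[symmetric]
    unfolding sample_def[abs_def, symmetric]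
    using Z_distributed f2_envelope[OF params g2_prob] AE_accepted distributed_sample prob_accepted
      inverse_V2_eq inverse_V2_ge_exp[OF params g2_prob]
    by blast
qed

end
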